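(* Every prime number that is antipalindromic in base $3$ has a base-$3$ expansion with an odd number $n$ of digits, where $n\ge 3$.
   Context: For an integer $b\ge 2$, every natural number $m$ has a unique base-$b$ expansion $m=a_nb^n+\dots+a_1b+a_0$ with $a_0,\dots,a_n\in\{0,1,\dots,b-1\}$ and $a_n\neq 0$. The number $m$ is antipalindromic in base $b$ if $a_j=b-1-a_{n-j}$ for all $j\in\{0,1,\dots,n\}$. *)

theory Defs
  imports "HOL-Computational_Algebra.Primes"
begin

fun base_digits :: "nat \<Rightarrow> nat \<Rightarrow> nat list" where
  "base_digits b m = (if m = 0 \<or> b < 2 then [] else (m mod b) # base_digits b (m div b))"

declare base_digits.simps[simp del]

definition antipalindromic :: "nat \<Rightarrow> nat \<Rightarrow> bool" where
  "antipalindromic b m \<longleftrightarrow> m \<noteq> 0 \<and>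
     (let ds = base_digits b m; n = length ds - 1 in
        \<forall>j \<le> n. ds ! j = b - 1 - ds ! (n - j))"

end

theory Submission
  imports Defs "HOL-Number_Theory.Cong"
begin

text \<open>Opposite digits of an antipalindromic base-3 number add up to 2, so its digit sum equals
  its number of digits n. As 3 is odd, a number has the parity of its base-3 digit sum, so an
  antipalindromic prime p has the parity of n. If n were even, p would be 2, whose expansion has
  the single digit 2. If n = 1, the single digit d satisfies d = 2 - d, so p = 1.\<close>

lemma base_digits_0 [simp]: "base_digits b 0 = []"
  by (subst base_digits.simps) simp

lemma base_digits_base_less_2 [simp]: "b < 2 \<Longrightarrow> base_digits b m = []"
  by (subst base_digits.simps) simp

lemma base_digits_eq_Nil_iff: "base_digits b m = [] \<longleftrightarrow> m = 0 \<or> b < 2"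
  by (subst base_digits.simps) simp

lemma base_digits_step:
  "m \<noteq> 0 \<Longrightarrow> 2 \<le> b \<Longrightarrow> base_digits b m = (m mod b) # base_digits b (m div b)"
  by (subst base_digits.simps) simp

lemma base_digits_less:
  assumes "d \<in> set (base_digits b m)"
  shows "d < b"
  using assms
proof (induction m rule: less_induct)
  case (less m)
  then have "m \<noteq> 0" "2 \<le> b"
    by (auto intro: ccontr)
  then have "m div b < m"
    by simp
  with less \<open>m \<noteq> 0\<close> \<open>2 \<le> b\<close> show ?case
    by (auto simp: base_digits_step)
qed

lemma base_digits_single:
  assumes "length (base_digits b m) = 1"
  shows "base_digits b m = [m]"
proof -
  from assms have "m \<noteq> 0" "2 \<le> b"
    by (auto intro: ccontr)
  then have digits: "base_digits b m = (m mod b) # base_digits b (m div b)"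
    by (rule base_digits_step)
  with assms \<open>2 \<le> b\<close> have "m div b = 0"
    by (simp add: base_digits_eq_Nil_iff)
  then have "m < b"
    using \<open>2 \<le> b\<close> by (simp add: div_eq_0_iff)
  with digits \<open>m div b = 0\<close> show ?thesis
    by simp
qed

lemma cong_sum_list_base_digits:
  assumes "2 \<le> b"
  shows "[sum_list (base_digits b m) = m] (mod (b - 1))"
proof (induction m rule: less_induct)
  case (less m)
  show ?case
  proof (cases "m = 0")
    case False
    have "sum_list (base_digits b m) = m mod b + sum_list (base_digits b (m div b))"
      using False assms by (simp add: base_digits_step)
    also have "[m mod b + sum_list (base_digits b (m div b)) = m mod b + m div b] (mod (b - 1))"
      using less False assms by (simp add: cong_add_lcancel_nat)
    also have "[m mod b + m div b = m mod b + m div b * b] (mod (b - 1))"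
    proof -
      have "[1 = b] (mod (b - 1))"
        using assms by (simp add: cong_def le_mod_geq)
      then have "[m div b * 1 = m div b * b] (mod (b - 1))"
        by (rule cong_scalar_left)
      then show ?thesis
        unfolding mult_1_right by (rule cong_add_lcancel_nat[THEN iffD2])
    qed
    also have "m mod b + m div b * b = m"
      by simp
    finally show ?thesis .
  qed simp
qed

lemma antipalindromic_sum_list_base_digits:
  assumes "antipalindromic b m"
  shows "2 * sum_list (base_digits b m) = (b - 1) * length (base_digits b m)"
proof -
  define ds where "ds = base_digits b m"
  define n where "n = length ds - 1"
  have mirror: "\<forall>j \<le> n. ds ! j = b - 1 - ds ! (n - j)"
    using assms unfolding antipalindromic_def Let_def ds_def n_def by blast
  have pair: "ds ! j + rev ds ! j = b - 1" if "j < length ds" for j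
  proof -
    have "ds ! (n - j) < b"
      using that base_digits_less[of "ds ! (n - j)" b m] unfolding ds_def n_def by simp
    moreover have "j \<le> n"
      using that unfolding n_def by simp
    then have "ds ! j = b - 1 - ds ! (n - j)"
      using mirror by blast
    moreover have "rev ds ! j = ds ! (n - j)"
      using that unfolding n_def by (simp add: rev_nth)
    ultimately show ?thesis
      by linarith
  qed
  have "2 * sum_list ds = sum_list ds + sum_list (rev ds)"
    by simp
  also have "\<dots> = (\<Sum>j<length ds. ds ! j + rev ds ! j)"
    by (simp add: sum_list_sum_nth atLeast0LessThan sum.distrib)
  also have "\<dots> = (\<Sum>j<length ds. b - 1)"
    using pair by (intro sum.cong) simp_all
  also have "\<dots> = (b - 1) * length ds"
    by simp
  finally show ?thesis
    unfolding ds_def .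
qed

theorem mainTheorem7:
  fixes p :: nat
  assumes "prime p" and "antipalindromic 3 p"
  shows "odd (length (base_digits 3 p)) \<and> length (base_digits 3 p) \<ge> 3"
proof -
  define ds where "ds = base_digits 3 p"
  have sum_eq_length: "sum_list ds = length ds"
    using antipalindromic_sum_list_base_digits[OF assms(2)] unfolding ds_def by simp
  have "[length ds = p] (mod 2)"
    using cong_sum_list_base_digits[of 3 p] sum_eq_length unfolding ds_def by simp
  then have parity: "even (length ds) \<longleftrightarrow> even p"
    by (metis cong_def even_iff_mod_2_eq_zero)
  have "odd (length ds)"
  proof
    assume "even (length ds)"
    with parity have "even p"
      by simp
    with assms(1) have "p = 2"
      using prime_odd_nat prime_ge_2_nat le_neq_implies_less by blast
    then have "ds = [2]"
      unfolding ds_def by (simp add: base_digits_step)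
    with \<open>even (length ds)\<close> show False
      by simp
  qed
  moreover have "length ds \<noteq> 1"
  proof
    assume "length ds = 1"
    then have "ds = [p]"
      unfolding ds_def by (rule base_digits_single)
    with sum_eq_length assms(1) show False
      by simp
  qed
  ultimately show ?thesis
    unfolding ds_def by presburger
qed

end
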